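(* Let $h$ be a fixed-point-free isometry of order $3$ of the $E_8$ root lattice. In $E_8\perp E_8$ let $M=\{(x,x):x\in E_8\}$ and $M'=\{(hx,x):x\in E_8\}$. Then $M+M'$ is isometric to $A_2\otimes_{\mathbb Z}E_8$.
   Context: $A_2\otimes E_8$ denotes the tensor product of the root lattices $A_2$ and $E_8$ with the product bilinear form. *)

theory Defs
  imports "HOL-Analysis.Analysis"
begin

definition E8 :: "(real^8) set" where
  "E8 = {x. ((\<forall>i. x$i \<in> \<int>) \<or> (\<forall>i. x$i - 1/2 \<in> \<int>)) \<and> (\<Sum>i\<in>UNIV. x$i) / 2 \<in> \<int>}"

definition A2 :: "(real^3) set" where
  "A2 = {a. (\<forall>i. a$i \<in> \<int>) \<and> (\<Sum>i\<in>UNIV. a$i) = 0}"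

inductive_set zgen :: "'a::ab_group_add set \<Rightarrow> 'a set" for S where
  zero: "0 \<in> zgen S"
| gen: "x \<in> S \<Longrightarrow> x \<in> zgen S"
| add: "x \<in> zgen S \<Longrightarrow> y \<in> zgen S \<Longrightarrow> x + y \<in> zgen S"
| neg: "x \<in> zgen S \<Longrightarrow> - x \<in> zgen S"

text \<open>Outer product a \<otimes> b as an m x n real matrix; the Frobenius inner product on
  matrices satisfies <a\<otimes>b, c\<otimes>d> = <a,c><b,d> (product bilinear form).\<close>
definition outer :: "real^'m \<Rightarrow> real^'n \<Rightarrow> real^'n^'m" where
  "outer a b = (\<chi> i. \<chi> j. a$i * b$j)"

definition lattice_tensor :: "(real^'m) set \<Rightarrow> (real^'n) set \<Rightarrow> (real^'n^'m) set" where
  "lattice_tensor L K = zgen {outer a b | a b. a \<in> L \<and> b \<in> K}"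

text \<open>Isometry of lattices (bilinear form = inner product of the ambient space).\<close>
definition lattice_isometric :: "'a::real_inner set \<Rightarrow> 'b::real_inner set \<Rightarrow> bool" where
  "lattice_isometric L K \<longleftrightarrow> (\<exists>f. bij_betw f L K \<and>
     (\<forall>x\<in>L. \<forall>y\<in>L. f (x + y) = f x + f y) \<and>
     (\<forall>x\<in>L. \<forall>y\<in>L. inner (f x) (f y) = inner x y))"

end

theory Submission
  imports Defs
begin

(* Since h has order 3 and no nonzero fixed points, h^2 + h + 1 = 0 on E8 (the vector
   h^2 x + h x + x is fixed by h). Hence M + M' = {(x + h y, x + y)} is parametrised bijectively
   by (u, v) |-> (h^2 u + h v, h^2 u + v), and by h^2 + h = -1 the inner product pulls back to
   2<u,u'> - <u,v'> - <v,u'> + 2<v,v'>. This is the inner product of a (x) u + b (x) v in A2 (x) E8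
   for simple roots a, b of A2, whose Gram matrix is [[2,-1],[-1,2]]. An inner-product preserving
   bijection between additively closed sets is automatically additive. *)

locale add_subgroup =
  fixes K :: "'a::ab_group_add set"
  assumes zero_mem [simp]: "0 \<in> K"
    and add_mem: "x \<in> K \<Longrightarrow> y \<in> K \<Longrightarrow> x + y \<in> K"
    and neg_mem: "x \<in> K \<Longrightarrow> - x \<in> K"
begin

lemma diff_mem: "x \<in> K \<Longrightarrow> y \<in> K \<Longrightarrow> x - y \<in> K"
  using add_mem[of x "- y"] neg_mem[of y] by simp

end

lemma add_subgroup_scaleR_Ints:
  fixes K :: "'a::real_vector set"
  assumes "add_subgroup K" "x \<in> K" "k \<in> \<int>"
  shows "k *\<^sub>R x \<in> K"
proof -
  interpret add_subgroup K by fact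
  have nat: "real n *\<^sub>R x \<in> K" for n
    by (induction n) (simp_all add: scaleR_left_distrib add_mem assms(2))
  from \<open>k \<in> \<int>\<close> obtain n :: int where "k = of_int n" by (auto elim: Ints_cases)
  then show ?thesis
    using nat[of "nat n"] neg_mem[OF nat[of "nat (- n)"]] by (cases "n \<ge> 0") simp_all
qed

lemma add_subgroup_zgen: "add_subgroup (zgen S)"
  by unfold_locales (auto intro: zgen.intros)

lemma half_Ints_cases:
  fixes c :: real
  assumes "2 * c \<in> \<int>"
  shows "c \<in> \<int> \<or> c - 1/2 \<in> \<int>"
proof -
  obtain n :: int where n: "2 * c = of_int n" using assms by (auto elim: Ints_cases)
  show ?thesis
  proof (cases "even n")
    case True
    then obtain k where "n = 2 * k" by blast
    then have "c = of_int k" using n by simp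
    then show ?thesis by simp
  next
    case False
    then obtain k where "n = 2 * k + 1" using oddE by blast
    then have "c - 1/2 = of_int k" using n by simp
    then show ?thesis by simp
  qed
qed

lemma E8_iff:
  "x \<in> E8 \<longleftrightarrow> (\<exists>c. 2 * c \<in> \<int> \<and> (\<forall>i. x$i - c \<in> \<int>)) \<and> (\<Sum>i\<in>UNIV. x$i) / 2 \<in> \<int>"
proof -
  have "(\<forall>i. x$i \<in> \<int>) \<or> (\<forall>i. x$i - 1/2 \<in> \<int>) \<longleftrightarrow> (\<exists>c. 2 * c \<in> \<int> \<and> (\<forall>i. x$i - c \<in> \<int>))"
  proof
    assume "(\<forall>i. x$i \<in> \<int>) \<or> (\<forall>i. x$i - 1/2 \<in> \<int>)"
    then show "\<exists>c. 2 * c \<in> \<int> \<and> (\<forall>i. x$i - c \<in> \<int>)"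
      by (metis Ints_0 Ints_1 diff_zero mult_zero_right mult_2 field_sum_of_halves)
  next
    assume "\<exists>c. 2 * c \<in> \<int> \<and> (\<forall>i. x$i - c \<in> \<int>)"
    then obtain c where c: "2 * c \<in> \<int>" "\<forall>i. x$i - c \<in> \<int>" by blast
    have "x$i = (x$i - c) + c" "x$i - 1/2 = (x$i - c) + (c - 1/2)" for i by simp_all
    then show "(\<forall>i. x$i \<in> \<int>) \<or> (\<forall>i. x$i - 1/2 \<in> \<int>)"
      using half_Ints_cases[OF c(1)] c(2) by (metis Ints_add)
  qed
  then show ?thesis unfolding E8_def by blast
qed

lemma add_subgroup_E8: "add_subgroup E8"
proof
  show "(0::real^8) \<in> E8" by (simp add: E8_def)
next
  fix x y assume "x \<in> E8" "y \<in> E8"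
  then obtain c d where "2 * c \<in> \<int>" "\<forall>i. x$i - c \<in> \<int>" "(\<Sum>i\<in>UNIV. x$i) / 2 \<in> \<int>"
    "2 * d \<in> \<int>" "\<forall>i. y$i - d \<in> \<int>" "(\<Sum>i\<in>UNIV. y$i) / 2 \<in> \<int>"
    unfolding E8_iff by blast
  moreover have "(x + y)$i - (c + d) = (x$i - c) + (y$i - d)" for i by simp
  moreover have "(\<Sum>i\<in>UNIV. (x + y)$i) / 2 = (\<Sum>i\<in>UNIV. x$i) / 2 + (\<Sum>i\<in>UNIV. y$i) / 2"
    by (simp add: sum.distrib add_divide_distrib)
  ultimately show "x + y \<in> E8"
    unfolding E8_iff by (metis Ints_add distrib_left)
next
  fix x assume "x \<in> E8"
  then obtain c where "2 * c \<in> \<int>" "\<forall>i. x$i - c \<in> \<int>" "(\<Sum>i\<in>UNIV. x$i) / 2 \<in> \<int>"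
    unfolding E8_iff by blast
  moreover have "(- x)$i - (- c) = - (x$i - c)" for i by simp
  moreover have "(\<Sum>i\<in>UNIV. (- x)$i) / 2 = - ((\<Sum>i\<in>UNIV. x$i) / 2)"
    by (simp add: sum_negf)
  ultimately show "- x \<in> E8"
    unfolding E8_iff by (metis Ints_minus mult_minus_right)
qed

lemma inner_preserving_imp_additive:
  fixes f :: "'a::real_inner \<Rightarrow> 'b::real_inner"
  assumes inner: "\<forall>x\<in>L. \<forall>y\<in>L. inner (f x) (f y) = inner x y"
    and "x \<in> L" "y \<in> L" "x + y \<in> L"
  shows "f (x + y) = f x + f y"
proof -
  let ?d = "f (x + y) - f x - f y"
  have "inner ?d ?d = inner (x + y - x - y) (x + y - x - y)"
    unfolding inner_diff_left inner_diff_right using inner assms(2-4) by simp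
  then have "?d = 0" by simp
  then show ?thesis by (simp add: algebra_simps)
qed

lemma lattice_isometricI:
  assumes "bij_betw f L K"
    and "\<And>x y. x \<in> L \<Longrightarrow> y \<in> L \<Longrightarrow> x + y \<in> L"
    and "\<forall>x\<in>L. \<forall>y\<in>L. inner (f x) (f y) = inner x y"
  shows "lattice_isometric L K"
  unfolding lattice_isometric_def using assms inner_preserving_imp_additive by blast

lemma lattice_isometric_sym:
  assumes "lattice_isometric L K"
    and "\<And>x y. x \<in> K \<Longrightarrow> y \<in> K \<Longrightarrow> x + y \<in> K"
  shows "lattice_isometric K L"
proof -
  obtain f where f: "bij_betw f L K" "\<forall>x\<in>L. \<forall>y\<in>L. inner (f x) (f y) = inner x y"
    using assms(1) unfolding lattice_isometric_def by blast
  let ?g = "inv_into L f"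
  have "bij_betw ?g K L" using f(1) by (rule bij_betw_inv_into)
  moreover have "inner (?g x) (?g y) = inner x y" if "x \<in> K" "y \<in> K" for x y
    using f that bij_betw_inv_into_right[OF f(1)] bij_betw_apply[OF \<open>bij_betw ?g K L\<close>] by metis
  ultimately show ?thesis using assms(2) by (blast intro: lattice_isometricI)
qed

lemma outer_nth: "outer a b $ i = a$i *\<^sub>R b"
  by (simp add: outer_def vec_eq_iff)

lemma outer_add_right: "outer a (u + v) = outer a u + outer a v"
  by (simp add: vec_eq_iff outer_nth scaleR_right_distrib)

lemma outer_minus_right: "outer a (- u) = - outer a u"
  by (simp add: vec_eq_iff outer_nth)

lemma inner_outer: "inner (outer a u) (outer b v) = inner a b * inner u v"
proof -
  have "inner (outer a u) (outer b v) = (\<Sum>i\<in>UNIV. (a$i * b$i) * inner u v)"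
    unfolding inner_vec_def[of "outer a u"] outer_nth by (simp add: mult_ac)
  also have "\<dots> = inner a b * inner u v"
    by (simp add: inner_vec_def sum_distrib_right)
  finally show ?thesis .
qed

definition A2_root1 :: "real^3" where "A2_root1 = vector [1, -1, 0]"
definition A2_root2 :: "real^3" where "A2_root2 = vector [0, 1, -1]"

lemma A2_roots_nth [simp]:
  "A2_root1$1 = 1" "A2_root1$2 = -1" "A2_root1$3 = 0"
  "A2_root2$1 = 0" "A2_root2$2 = 1" "A2_root2$3 = -1"
  by (simp_all add: A2_root1_def A2_root2_def)

lemma A2_roots_mem: "A2_root1 \<in> A2" "A2_root2 \<in> A2"
  by (simp_all add: A2_def sum_3 forall_3)

lemma A2_roots_inner:
  "inner A2_root1 A2_root1 = 2" "inner A2_root1 A2_root2 = -1"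
  "inner A2_root2 A2_root1 = -1" "inner A2_root2 A2_root2 = 2"
  by (simp_all add: inner_vec_def sum_3)

lemma outer_A2_eq:
  assumes "a \<in> A2"
  shows "outer a b = outer A2_root1 (a$1 *\<^sub>R b) + outer A2_root2 ((- a$3) *\<^sub>R b)"
proof -
  have "a$2 = - a$1 - a$3" using assms by (simp add: A2_def sum_3)
  then show ?thesis
    by (simp add: vec_eq_iff forall_3 outer_nth left_diff_distrib)
qed

lemma outer_A2_roots_nth:
  "(outer A2_root1 u + outer A2_root2 v) $ 1 = u"
  "(outer A2_root1 u + outer A2_root2 v) $ 3 = - v"
  by (simp_all add: outer_nth)

lemma lattice_tensor_A2:
  assumes "add_subgroup K"
  shows "lattice_tensor A2 K = {outer A2_root1 u + outer A2_root2 v | u v. u \<in> K \<and> v \<in> K}"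
    (is "_ = ?T")
proof
  interpret add_subgroup K by fact
  show "lattice_tensor A2 K \<subseteq> ?T"
  proof
    fix z assume "z \<in> lattice_tensor A2 K"
    then show "z \<in> ?T"
      unfolding lattice_tensor_def
    proof (induction rule: zgen.induct)
      case zero
      have "(0::real^'a^3) = outer A2_root1 0 + outer A2_root2 0"
        by (simp add: vec_eq_iff outer_nth)
      then show ?case using zero_mem by blast
    next
      case (gen x)
      then obtain a b where "x = outer a b" "a \<in> A2" "b \<in> K" by blast
      moreover from \<open>a \<in> A2\<close> have "a$1 \<in> \<int>" "- a$3 \<in> \<int>" by (auto simp: A2_def)
      ultimately show ?case
        using outer_A2_eq add_subgroup_scaleR_Ints[OF assms] by blast
    next
      case (add x y)
      then obtain u v u' v' where "x = outer A2_root1 u + outer A2_root2 v" "u \<in> K" "v \<in> K"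
        "y = outer A2_root1 u' + outer A2_root2 v'" "u' \<in> K" "v' \<in> K" by blast
      then have "x + y = outer A2_root1 (u + u') + outer A2_root2 (v + v')"
        "u + u' \<in> K" "v + v' \<in> K"
        by (simp_all add: outer_add_right add_mem algebra_simps)
      then show ?case by blast
    next
      case (neg x)
      then obtain u v where "x = outer A2_root1 u + outer A2_root2 v" "u \<in> K" "v \<in> K" by blast
      then have "- x = outer A2_root1 (- u) + outer A2_root2 (- v)" "- u \<in> K" "- v \<in> K"
        by (simp_all add: outer_minus_right neg_mem)
      then show ?case by blast
    qed
  qed
  show "?T \<subseteq> lattice_tensor A2 K"
    unfolding lattice_tensor_def using A2_roots_mem by (blast intro: zgen.intros)
qed

locale fixpoint_free_order3_isometry = add_subgroup K for K :: "'a::real_inner set" +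
  fixes h :: "'a \<Rightarrow> 'a"
  assumes h_mem: "x \<in> K \<Longrightarrow> h x \<in> K"
    and h_add: "x \<in> K \<Longrightarrow> y \<in> K \<Longrightarrow> h (x + y) = h x + h y"
    and h_inner: "x \<in> K \<Longrightarrow> y \<in> K \<Longrightarrow> inner (h x) (h y) = inner x y"
    and h_cube: "x \<in> K \<Longrightarrow> h (h (h x)) = x"
    and h_fixed: "x \<in> K \<Longrightarrow> h x = x \<Longrightarrow> x = 0"
begin

lemma h_sq_add_h:
  assumes "x \<in> K"
  shows "h (h x) + h x = - x"
proof -
  let ?z = "h (h x) + h x + x"
  have "?z \<in> K" using assms by (simp add: h_mem add_mem)
  moreover have "h ?z = ?z"
    using assms by (simp add: h_mem add_mem h_add h_cube algebra_simps)
  ultimately have "?z = 0" by (rule h_fixed)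
  then show ?thesis by (simp add: algebra_simps eq_neg_iff_add_eq_0)
qed

definition tensor_to_sum :: "'a \<Rightarrow> 'a \<Rightarrow> 'a \<times> 'a" where
  "tensor_to_sum u v = (h (h u) + h v, h (h u) + v)"

lemma inner_tensor_to_sum:
  assumes "u \<in> K" "v \<in> K" "u' \<in> K" "v' \<in> K"
  shows "inner (tensor_to_sum u v) (tensor_to_sum u' v')
    = 2 * inner u u' - inner u v' - inner v u' + 2 * inner v v'"
proof -
  have "inner (h (h u)) (h (h u')) = inner u u'" "inner (h v) (h v') = inner v v'"
    "inner (h (h u)) (h v') = inner (h u) v'" "inner (h v) (h (h u')) = inner v (h u')"
    using assms by (simp_all add: h_inner h_mem)
  moreover have "inner (h (h u)) v' + inner (h u) v' = - inner u v'"
    "inner v (h (h u')) + inner v (h u') = - inner v u'"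
    using h_sq_add_h assms by (metis inner_add_left inner_add_right inner_minus_left inner_minus_right)+
  ultimately show ?thesis
    by (simp add: tensor_to_sum_def inner_Pair inner_add_left inner_add_right)
qed

lemma tensor_to_sum_inj:
  assumes "u \<in> K" "v \<in> K" "u' \<in> K" "v' \<in> K" "tensor_to_sum u v = tensor_to_sum u' v'"
  shows "u = u' \<and> v = v'"
proof -
  have "h (h u) + h v = h (h u') + h v'" "h (h u) + v = h (h u') + v'"
    using assms(5) by (simp_all add: tensor_to_sum_def)
  then have "(h (h u) + h v) - (h (h u) + v) = (h (h u') + h v') - (h (h u') + v')"
    by simp
  then have "h v - h v' = v - v'"
    by (simp add: algebra_simps)
  moreover have "h v = h (v - v') + h v'"
    using h_add[of "v - v'" v'] diff_mem assms by simp
  ultimately have "h (v - v') = v - v'"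
    by simp
  then have "v = v'" using h_fixed diff_mem assms by fastforce
  then have "h (h (h u)) = h (h (h u'))"
    using \<open>h (h u) + v = h (h u') + v'\<close> by simp
  then show ?thesis using \<open>v = v'\<close> assms by (simp add: h_cube)
qed

lemma tensor_to_sum_image:
  "(\<lambda>(u, v). tensor_to_sum u v) ` (K \<times> K) = {(x + h y, x + y) | x y. x \<in> K \<and> y \<in> K}"
proof (intro equalityI subsetI)
  fix p assume "p \<in> (\<lambda>(u, v). tensor_to_sum u v) ` (K \<times> K)"
  then obtain u v where "p = tensor_to_sum u v" "u \<in> K" "v \<in> K" by auto
  then show "p \<in> {(x + h y, x + y) | x y. x \<in> K \<and> y \<in> K}"
    unfolding tensor_to_sum_def using h_mem by blast
next
  fix p assume "p \<in> {(x + h y, x + y) | x y. x \<in> K \<and> y \<in> K}"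
  then obtain x y where "p = (x + h y, x + y)" "x \<in> K" "y \<in> K" by blast
  then have "p = tensor_to_sum (h x) y" by (simp add: tensor_to_sum_def h_cube)
  then show "p \<in> (\<lambda>(u, v). tensor_to_sum u v) ` (K \<times> K)"
    using \<open>x \<in> K\<close> \<open>y \<in> K\<close> h_mem by blast
qed

lemma twisted_sum_add_closed:
  assumes "p \<in> {(x + h y, x + y) | x y. x \<in> K \<and> y \<in> K}"
    and "q \<in> {(x + h y, x + y) | x y. x \<in> K \<and> y \<in> K}"
  shows "p + q \<in> {(x + h y, x + y) | x y. x \<in> K \<and> y \<in> K}"
proof -
  obtain x y x' y' where "p = (x + h y, x + y)" "q = (x' + h y', x' + y')"
    and mem: "x \<in> K" "y \<in> K" "x' \<in> K" "y' \<in> K" using assms by blast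
  then have "p + q = ((x + x') + h (y + y'), (x + x') + (y + y'))"
    by (simp add: h_add algebra_simps)
  then show ?thesis using mem add_mem by blast
qed

end

lemma lattice_isometric_twisted_sum_A2_tensor:
  fixes K :: "(real^'n) set"
  assumes "fixpoint_free_order3_isometry K h"
  shows "lattice_isometric {(x + h y, x + y) | x y. x \<in> K \<and> y \<in> K} (lattice_tensor A2 K)"
proof -
  interpret fixpoint_free_order3_isometry K h by fact
  let ?L = "{(x + h y, x + y) | x y. x \<in> K \<and> y \<in> K}"
  let ?T = "lattice_tensor A2 K"
  define g where "g z = tensor_to_sum (z$1) (- z$3)" for z :: "real^'n^3"
  have T_eq: "?T = {outer A2_root1 u + outer A2_root2 v | u v. u \<in> K \<and> v \<in> K}"
    using lattice_tensor_A2 add_subgroup_axioms .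
  have g_outer: "g (outer A2_root1 u + outer A2_root2 v) = tensor_to_sum u v" for u v
    unfolding g_def outer_A2_roots_nth by simp
  have "inj_on g ?T"
  proof (rule inj_onI)
    fix z z' assume "z \<in> ?T" "z' \<in> ?T" "g z = g z'"
    then obtain u v u' v' where "z = outer A2_root1 u + outer A2_root2 v"
      "z' = outer A2_root1 u' + outer A2_root2 v'" "u \<in> K" "v \<in> K" "u' \<in> K" "v' \<in> K"
      "tensor_to_sum u v = tensor_to_sum u' v'"
      unfolding T_eq by (auto simp: g_outer)
    then show "z = z'" using tensor_to_sum_inj by blast
  qed
  moreover have "g ` ?T = ?L"
  proof -
    have T_image: "?T = (\<lambda>(u, v). outer A2_root1 u + outer A2_root2 v) ` (K \<times> K)"
      unfolding T_eq by auto
    show ?thesis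
      unfolding T_image tensor_to_sum_image[symmetric] image_image
      by (simp add: g_outer case_prod_unfold)
  qed
  moreover have "inner (g z) (g z') = inner z z'" if mem: "z \<in> ?T" "z' \<in> ?T" for z z'
  proof -
    obtain u v u' v' where "z = outer A2_root1 u + outer A2_root2 v"
      "z' = outer A2_root1 u' + outer A2_root2 v'" "u \<in> K" "v \<in> K" "u' \<in> K" "v' \<in> K"
      using mem unfolding T_eq by blast
    then show ?thesis
      by (simp add: g_outer inner_tensor_to_sum inner_add_left inner_add_right inner_outer A2_roots_inner)
  qed
  ultimately have "lattice_isometric ?T ?L"
    using add_subgroup.add_mem[OF add_subgroup_zgen]
    by (intro lattice_isometricI) (auto simp: bij_betw_def lattice_tensor_def)
  then show ?thesis
    using twisted_sum_add_closed by (rule lattice_isometric_sym)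
qed

theorem lemma2p7:
  fixes h :: "real^8 \<Rightarrow> real^8"
  assumes iso_bij: "bij_betw h E8 E8"
    and iso_add: "\<forall>x\<in>E8. \<forall>y\<in>E8. h (x + y) = h x + h y"
    and iso_inner: "\<forall>x\<in>E8. \<forall>y\<in>E8. inner (h x) (h y) = inner x y"
    and order3: "\<forall>x\<in>E8. h (h (h x)) = x"
    and not_id: "\<exists>x\<in>E8. h x \<noteq> x"
    and fpf: "\<forall>x\<in>E8. h x = x \<longrightarrow> x = 0"
  shows "lattice_isometric
           {m + m' | m m'. m \<in> {(x, x) | x. x \<in> E8} \<and> m' \<in> {(h x, x) | x. x \<in> E8}}
           (lattice_tensor A2 E8)"
proof -
  have "fixpoint_free_order3_isometry E8 h"
    using add_subgroup_E8 bij_betw_apply[OF iso_bij] iso_add iso_inner order3 fpf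
    by (simp add: fixpoint_free_order3_isometry_def fixpoint_free_order3_isometry_axioms_def)
  moreover have "{m + m' | m m'. m \<in> {(x, x) | x. x \<in> E8} \<and> m' \<in> {(h x, x) | x. x \<in> E8}}
      = {(x + h y, x + y) | x y. x \<in> E8 \<and> y \<in> E8}"
    by auto
  ultimately show ?thesis
    by (simp add: lattice_isometric_twisted_sum_A2_tensor)
qed

end
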